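(* If a $2$-step nilpotent real Lie algebra $\mathfrak{n}$ admits a $3$-step complex structure, then $\dim[\mathfrak{n},\mathfrak{n}]\geq3$.
   Context: A complex structure on a real Lie algebra $\mathfrak{g}$ is a linear map $J:\mathfrak{g}\to\mathfrak{g}$ with $J^2=-I$ and $N_J(x,y):=[x,y]+J([Jx,y]+[x,Jy])-[Jx,Jy]=0$ for all $x,y\in\mathfrak{g}$. Given such $J$, define inductively $\mathfrak{a}_0(J)=0$ and $\mathfrak{a}_\ell(J)=\{x\in\mathfrak{g}: [x,\mathfrak{g}]\subset\mathfrak{a}_{\ell-1}(J)\text{ and }[Jx,\mathfrak{g}]\subset\mathfrak{a}_{\ell-1}(J)\}$ for $\ell\ge1$. $J$ is called nilpotent if $\mathfrak{a}_t(J)=\mathfrak{g}$ for some positive integer $t$, and $t$-step if $t$ is the smallest such integer. A Lie algebra $\mathfrak{n}$ is $2$-step nilpotent if it is non-abelian and $[\mathfrak{n},\mathfrak{n}]\subset\mathfrak{z}$ (the center). *)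

theory Defs
  imports "HOL-Analysis.Analysis"
begin

definition lie_algebra :: "('a::real_vector \<Rightarrow> 'a \<Rightarrow> 'a) \<Rightarrow> bool" where
  "lie_algebra br \<longleftrightarrow>
     (\<forall>x. linear (br x)) \<and> (\<forall>y. linear (\<lambda>x. br x y)) \<and>
     (\<forall>x. br x x = 0) \<and>
     (\<forall>x y z. br x (br y z) + br y (br z x) + br z (br x y) = 0)"

definition complex_structure :: "('a::real_vector \<Rightarrow> 'a \<Rightarrow> 'a) \<Rightarrow> ('a \<Rightarrow> 'a) \<Rightarrow> bool" where
  "complex_structure br J \<longleftrightarrow>
     linear J \<and> (\<forall>x. J (J x) = - x) \<and>
     (\<forall>x y. br x y + J (br (J x) y + br x (J y)) - br (J x) (J y) = 0)"

fun asc_series :: "('a::real_vector \<Rightarrow> 'a \<Rightarrow> 'a) \<Rightarrow> ('a \<Rightarrow> 'a) \<Rightarrow> nat \<Rightarrow> 'a set" where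
  "asc_series br J 0 = {0}"
| "asc_series br J (Suc l) =
     {x. (\<forall>y. br x y \<in> asc_series br J l) \<and> (\<forall>y. br (J x) y \<in> asc_series br J l)}"

definition nilpotent_step :: "('a::real_vector \<Rightarrow> 'a \<Rightarrow> 'a) \<Rightarrow> ('a \<Rightarrow> 'a) \<Rightarrow> nat \<Rightarrow> bool" where
  "nilpotent_step br J t \<longleftrightarrow>
     0 < t \<and> asc_series br J t = UNIV \<and> (\<forall>s. 0 < s \<and> s < t \<longrightarrow> asc_series br J s \<noteq> UNIV)"

definition lie_center :: "('a::real_vector \<Rightarrow> 'a \<Rightarrow> 'a) \<Rightarrow> 'a set" where
  "lie_center br = {z. \<forall>x. br z x = 0}"

definition derived_algebra :: "('a::real_vector \<Rightarrow> 'a \<Rightarrow> 'a) \<Rightarrow> 'a set" where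
  "derived_algebra br = span {br x y | x y. True}"

definition two_step_nilpotent :: "('a::real_vector \<Rightarrow> 'a \<Rightarrow> 'a) \<Rightarrow> bool" where
  "two_step_nilpotent br \<longleftrightarrow>
     (\<exists>x y. br x y \<noteq> 0) \<and> derived_algebra br \<subseteq> lie_center br"

end

theory Submission
  imports Defs
begin

text \<open>
  Since a_2(J) is proper, some bracket w = [x, y] lies outside a_1(J); since a_3(J) is
  everything, w lies in a_2(J). Being central but not in a_1(J), w has some nonzero
  v = [Jw, y'], and v lies in a_1(J). The Nijenhuis condition for the pair (Jw, Jy'),
  in which J(Jw) = -w is central, gives [Jw, Jy'] = Jv, so Jv lies in a_1(J) and in
  [n, n] as well. As J has no real eigenvalue, v and Jv are independent, and w is not
  in their span, which lies in the subspace a_1(J). So w, v, Jv are three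
  independent vectors of [n, n].
\<close>

lemma independent_card_lt_dim_insert_outside_subspace:
  fixes B :: "'a::euclidean_space set"
  assumes "subspace A" and "independent B" and "B \<subseteq> A" and "w \<notin> A" and "insert w B \<subseteq> S"
  shows "card B < dim S"
proof -
  have "w \<notin> span B"
    using assms(1,3,4) span_minimal by blast
  then have "independent (insert w B)"
    using assms(2) by (rule independent_insertI)
  then have "card (insert w B) \<le> dim S"
    using assms(5) independent_card_le_dim by blast
  moreover have "card (insert w B) = Suc (card B)"
    using assms(3,4) independent_imp_finite[OF assms(2)] by (subst card_insert_disjoint) auto
  ultimately show ?thesis by simp
qed

lemma square_eq_neg_id_no_eigenvector:
  fixes J :: "'a::real_vector \<Rightarrow> 'a"
  assumes "linear J" and "\<And>x. J (J x) = - x" and "v \<noteq> 0"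
  shows "J v \<notin> span {v}"
proof
  assume "J v \<in> span {v}"
  then obtain c where c: "J v = c *\<^sub>R v"
    by (auto simp: span_singleton)
  have "- v = J (c *\<^sub>R v)"
    using c assms(2)[of v] by simp
  also have "\<dots> = (c * c) *\<^sub>R v"
    using c by (simp add: linear_scale[OF assms(1)])
  finally have "(c * c) *\<^sub>R v + v = 0"
    by (metis add.commute neg_eq_iff_add_eq_0)
  then have "(c * c + 1) *\<^sub>R v = 0"
    by (simp only: scaleR_add_left scaleR_one)
  moreover have "c * c + 1 \<noteq> 0"
    using zero_le_square[of c] by linarith
  ultimately show False
    using assms(3) by simp
qed

lemma independent_pair_square_eq_neg_id:
  fixes J :: "'a::real_vector \<Rightarrow> 'a"
  assumes "linear J" and "\<And>x. J (J x) = - x" and "v \<noteq> 0"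
  shows "independent {v, J v}" and "card {v, J v} = 2"
proof -
  have "J v \<notin> span {v}"
    using assms by (rule square_eq_neg_id_no_eigenvector)
  then have "independent {J v, v}"
    using assms(3) by (simp add: independent_insert)
  then show "independent {v, J v}"
    by (simp add: insert_commute)
  have "J v \<noteq> v"
    using \<open>J v \<notin> span {v}\<close> by (metis insertI1 span_base)
  then show "card {v, J v} = 2"
    by simp
qed

lemma lie_algebra_linear_left: "lie_algebra br \<Longrightarrow> linear (\<lambda>x. br x y)"
  unfolding lie_algebra_def by blast

lemma lie_algebra_linear_right: "lie_algebra br \<Longrightarrow> linear (br x)"
  unfolding lie_algebra_def by blast

lemma complex_structure_linear: "complex_structure br J \<Longrightarrow> linear J"
  unfolding complex_structure_def by blast

lemma complex_structure_square: "complex_structure br J \<Longrightarrow> J (J x) = - x"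
  unfolding complex_structure_def by blast

lemma complex_structure_nijenhuis:
  "complex_structure br J \<Longrightarrow> br x y + J (br (J x) y + br x (J y)) - br (J x) (J y) = 0"
  unfolding complex_structure_def by blast

lemma subspace_asc_series:
  assumes "lie_algebra br" and "linear J"
  shows "subspace (asc_series br J l)"
proof (induction l)
  case 0
  show ?case by simp
next
  case (Suc l)
  note lin = lie_algebra_linear_left[OF assms(1)]
  show ?case
    using Suc unfolding subspace_def
    by (auto simp: linear_0[OF lin] linear_add[OF lin] linear_scale[OF lin]
        linear_0[OF assms(2)] linear_add[OF assms(2)] linear_scale[OF assms(2)])
qed

lemma mem_asc_series_1:
  "x \<in> asc_series br J 1 \<longleftrightarrow> (\<forall>y. br x y = 0) \<and> (\<forall>y. br (J x) y = 0)"
  by (simp add: One_nat_def)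

lemma bracket_in_asc_series_if_Suc_UNIV:
  "asc_series br J (Suc l) = UNIV \<Longrightarrow> br x y \<in> asc_series br J l"
  by auto

lemma bracket_notin_asc_series_if_Suc_not_UNIV:
  assumes "asc_series br J (Suc l) \<noteq> UNIV"
  obtains x y where "br x y \<notin> asc_series br J l"
  using assms by auto

lemma bracket_in_derived_algebra: "br x y \<in> derived_algebra br"
  unfolding derived_algebra_def by (rule span_base) blast

lemma two_step_nilpotent_bracket_in_center:
  "two_step_nilpotent br \<Longrightarrow> br x y \<in> lie_center br"
  unfolding two_step_nilpotent_def using bracket_in_derived_algebra by blast

lemma complex_structure_bracket_J_center:
  assumes "lie_algebra br" and "complex_structure br J" and "w \<in> lie_center br"
  shows "br (J w) (J y) = J (br (J w) y)"
proof -
  note JJ = complex_structure_square[OF assms(2)]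
  have "br (- w) z = 0" for z
    using assms(3) by (simp add: lie_center_def linear_neg[OF lie_algebra_linear_left[OF assms(1)]])
  then have "br (J w) (J y) + J (br (J w) (- y)) = 0"
    using complex_structure_nijenhuis[OF assms(2), of "J w" "J y"] by (simp add: JJ)
  then show ?thesis
    by (simp add: linear_neg[OF lie_algebra_linear_right[OF assms(1)]]
        linear_neg[OF complex_structure_linear[OF assms(2)]] eq_neg_iff_add_eq_0)
qed

lemma three_step_complex_structure_witnesses:
  assumes "lie_algebra br" and "two_step_nilpotent br" and "complex_structure br J"
    and "nilpotent_step br J 3"
  obtains w v where "w \<in> derived_algebra br" and "w \<notin> asc_series br J 1" and "v \<noteq> 0"
    and "{v, J v} \<subseteq> asc_series br J 1 \<inter> derived_algebra br"
proof -
  have "asc_series br J 2 \<noteq> UNIV" and "asc_series br J 3 = UNIV"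
    using assms(4) unfolding nilpotent_step_def by auto
  then obtain x y where w_notin: "br x y \<notin> asc_series br J 1"
    and "br x y \<in> asc_series br J 2"
    by (metis bracket_notin_asc_series_if_Suc_not_UNIV bracket_in_asc_series_if_Suc_UNIV
        Suc_1 eval_nat_numeral(3))
  define w where "w = br x y"
  then have Jw_in: "br (J w) z \<in> asc_series br J 1" for z
    using \<open>br x y \<in> asc_series br J 2\<close> by (simp add: numeral_eq_Suc)
  have w_center: "w \<in> lie_center br"
    unfolding w_def using assms(2) by (rule two_step_nilpotent_bracket_in_center)
  then obtain y' where "br (J w) y' \<noteq> 0"
    using w_notin unfolding w_def mem_asc_series_1 lie_center_def by auto
  moreover have "J (br (J w) y') = br (J w) (J y')"
    using assms(1,3) w_center by (rule complex_structure_bracket_J_center[symmetric])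
  ultimately show ?thesis
    using that[of w "br (J w) y'"] w_notin Jw_in
    by (auto simp: w_def bracket_in_derived_algebra)
qed

theorem mainTheorem6:
  fixes br :: "'a::euclidean_space \<Rightarrow> 'a \<Rightarrow> 'a" and J :: "'a \<Rightarrow> 'a"
  assumes "lie_algebra br"
    and "two_step_nilpotent br"
    and "complex_structure br J"
    and "nilpotent_step br J 3"
  shows "dim (derived_algebra br) \<ge> 3"
proof -
  obtain w v where "w \<in> derived_algebra br" and "w \<notin> asc_series br J 1" and "v \<noteq> 0"
    and v_Jv: "{v, J v} \<subseteq> asc_series br J 1 \<inter> derived_algebra br"
    using assms by (rule three_step_complex_structure_witnesses)
  note linJ = complex_structure_linear[OF assms(3)]
  note JJ = complex_structure_square[OF assms(3)]
  have "card {v, J v} < dim (derived_algebra br)"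
  proof (rule independent_card_lt_dim_insert_outside_subspace)
    show "subspace (asc_series br J 1)"
      using assms(1) linJ by (rule subspace_asc_series)
    show "independent {v, J v}"
      using linJ JJ \<open>v \<noteq> 0\<close> by (rule independent_pair_square_eq_neg_id)
  qed (use \<open>w \<in> derived_algebra br\<close> \<open>w \<notin> asc_series br J 1\<close> v_Jv in auto)
  moreover have "card {v, J v} = 2"
    using linJ JJ \<open>v \<noteq> 0\<close> by (rule independent_pair_square_eq_neg_id)
  ultimately show ?thesis
    by simp
qed

end
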